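(* Let $\Gamma$ be a finite Abelian group, $S$ a symmetric multiset of elements of $\Gamma$ with $|S|=d$, and $G=\mathrm{Cay}(\Gamma,S)$. Then for every integer $t\ge0$, $$\frac{\mathrm{CP}_t}{\mathrm{CP}_{2t}} \le (2e)^{4d}.$$
   Context: A multiset $S$ of elements of $\Gamma$ is symmetric if $x$ and $-x$ have equal multiplicity for all $x$; $\mathrm{Cay}(\Gamma,S)$ has vertex set $\Gamma$ and an edge $(v,v+s)$ for every $v$ and every element $s$ of $S$ (with multiplicity). With $\mathbf{A}$ the normalized adjacency matrix of $G$ (here $\mathbf{A}=\frac1d\times$ the adjacency matrix), $\mathrm{CP}_t=\|(\tfrac12I+\tfrac12\mathbf{A})^te_0\|_2^2$ is the $t$-step lazy collision probability from the identity $0\in\Gamma$. *)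

theory Defs
  imports "HOL-Analysis.Analysis" "HOL-Library.Multiset"
begin

primrec matpow :: "real^'n^'n \<Rightarrow> nat \<Rightarrow> real^'n^'n" where
  "matpow M 0 = mat 1"
| "matpow M (Suc k) = matpow M k ** M"

definition symmetric_mset :: "'a::ab_group_add multiset \<Rightarrow> bool" where
  "symmetric_mset S \<longleftrightarrow> (\<forall>x. count S x = count S (- x))"

text \<open>Adjacency matrix of Cay(Gamma,S): entry (u,v) is the number of edges (u,u+s), s in S,
  with u+s = v, i.e. the multiplicity of v - u in S.\<close>
definition cay_adj :: "('a::{ab_group_add,finite}) multiset \<Rightarrow> ((real, 'a) vec, 'a) vec" where
  "cay_adj S = (\<chi> u. \<chi> v. real (count S (v - u)))"

definition cay_norm_adj :: "('a::{ab_group_add,finite}) multiset \<Rightarrow> ((real, 'a) vec, 'a) vec" where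
  "cay_norm_adj S = (1 / real (size S)) *\<^sub>R cay_adj S"

definition lazy_walk :: "('a::{ab_group_add,finite}) multiset \<Rightarrow> ((real, 'a) vec, 'a) vec" where
  "lazy_walk S = (1/2) *\<^sub>R mat 1 + (1/2) *\<^sub>R cay_norm_adj S"

definition CP :: "('a::{ab_group_add,finite}) multiset \<Rightarrow> nat \<Rightarrow> real" where
  "CP S t = (norm (matpow (lazy_walk S) t *v axis 0 1)) ^ 2"

end

theory Submission
  imports Defs "HOL-Library.Poly_Mapping"
begin

text \<open>Work in the group algebra \<open>\<real>[\<Gamma>]\<close>, i.e. finitely supported functions \<open>\<Gamma> \<Rightarrow> \<real>\<close> under
  convolution. The lazy walk step is \<open>Z = (1/d) \<Sum>\<^sub>s\<^sub>\<in>\<^sub>S (\<delta>\<^sub>0/2 + \<delta>\<^sub>s/4 + \<delta>\<^sub>-\<^sub>s/4)\<close> and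
  \<open>CP\<^sub>t = Z\<^sup>2\<^sup>t(0)\<close>. Call \<open>X\<close> slowly decaying with exponent \<open>a\<close> if \<open>(n+1) X\<^sup>n \<le> (n+1+a) X\<^sup>n\<^sup>+\<^sup>1\<close>
  coefficientwise. Each summand of \<open>Z\<close> has exponent 1, because its powers are central binomial
  laws, and exponents add under convex combinations (binomial expansion and Pascal's rule), so
  \<open>Z\<close> has exponent \<open>d\<close>. Thus \<open>pochhammer (k+1) d \<cdot> Z\<^sup>k(0)\<close> increases with \<open>k\<close>, which yields
  \<open>CP\<^sub>t \<le> 2\<^sup>d CP\<^sub>2\<^sub>t\<close>, much better than the claimed bound.\<close>

lemma lookup_mult_group:
  fixes f g :: "'g::{ab_group_add,finite} \<Rightarrow>\<^sub>0 'b::comm_semiring_1"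
  shows "Poly_Mapping.lookup (f * g) x = (\<Sum>y\<in>UNIV. Poly_Mapping.lookup f y * Poly_Mapping.lookup g (x - y))"
proof -
  have "(\<Sum>q. Poly_Mapping.lookup g q when x = y + q) = Poly_Mapping.lookup g (x - y)" for y
  proof -
    have eq: "(\<lambda>q. Poly_Mapping.lookup g q when x = y + q) = (\<lambda>q. if q = x - y then Poly_Mapping.lookup g q else 0)"
      by (auto simp: fun_eq_iff when_def)
    show ?thesis unfolding eq by simp
  qed
  then show ?thesis
    by (simp add: lookup_mult Sum_any.expand_superset[of UNIV])
qed

lemma lookup_single_0_mult [simp]:
  fixes f :: "'g::{ab_group_add,finite} \<Rightarrow>\<^sub>0 'b::comm_semiring_1"
  shows "Poly_Mapping.lookup (Poly_Mapping.single 0 c * f) x = c * Poly_Mapping.lookup f x"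
  by (simp add: lookup_mult_group lookup_single when_mult) (simp add: when_def)

lemma single_0_power:
  "Poly_Mapping.single (0::'g::monoid_add) a ^ n = Poly_Mapping.single 0 (a ^ n :: 'b::comm_semiring_1)"
  by (induction n) (simp_all add: mult_single mult.commute)

lemma lookup_mult_uminus:
  fixes f g :: "'g::{ab_group_add,finite} \<Rightarrow>\<^sub>0 'b::comm_semiring_1"
  assumes "\<And>x. Poly_Mapping.lookup f (- x) = Poly_Mapping.lookup f x"
    and "\<And>x. Poly_Mapping.lookup g (- x) = Poly_Mapping.lookup g x"
  shows "Poly_Mapping.lookup (f * g) (- x) = Poly_Mapping.lookup (f * g) x"
proof -
  have "Poly_Mapping.lookup (f * g) (- x) = (\<Sum>y\<in>UNIV. Poly_Mapping.lookup f (- y) * Poly_Mapping.lookup g (- x - - y))"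
    unfolding lookup_mult_group by (rule sum.reindex_bij_witness[of _ uminus uminus]) auto
  also have "\<dots> = Poly_Mapping.lookup (f * g) x"
    unfolding lookup_mult_group by (metis assms minus_diff_eq minus_diff_minus)
  finally show ?thesis .
qed

lemma lookup_power_uminus:
  fixes f :: "'g::{ab_group_add,finite} \<Rightarrow>\<^sub>0 'b::comm_semiring_1"
  assumes "\<And>x. Poly_Mapping.lookup f (- x) = Poly_Mapping.lookup f x"
  shows "Poly_Mapping.lookup (f ^ n) (- x) = Poly_Mapping.lookup (f ^ n) x"
proof (induction n arbitrary: x)
  case 0
  then show ?case by (simp add: lookup_one)
next
  case (Suc n)
  then show ?case by (simp add: lookup_mult_uminus assms)
qed

definition nonneg_coeffs :: "('g \<Rightarrow>\<^sub>0 real) \<Rightarrow> bool" where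
  "nonneg_coeffs f \<longleftrightarrow> (\<forall>x. 0 \<le> Poly_Mapping.lookup f x)"

lemma nonneg_coeffs_add: "nonneg_coeffs f \<Longrightarrow> nonneg_coeffs g \<Longrightarrow> nonneg_coeffs (f + g)"
  by (simp add: nonneg_coeffs_def lookup_add)

lemma nonneg_coeffs_single: "0 \<le> c \<Longrightarrow> nonneg_coeffs (Poly_Mapping.single x c)"
  by (simp add: nonneg_coeffs_def lookup_single when_def)

lemma nonneg_coeffs_mult:
  fixes f g :: "'g::{ab_group_add,finite} \<Rightarrow>\<^sub>0 real"
  shows "nonneg_coeffs f \<Longrightarrow> nonneg_coeffs g \<Longrightarrow> nonneg_coeffs (f * g)"
  by (simp add: nonneg_coeffs_def lookup_mult_group sum_nonneg)

lemma nonneg_coeffs_power: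
  fixes f :: "'g::{ab_group_add,finite} \<Rightarrow>\<^sub>0 real"
  assumes "nonneg_coeffs f"
  shows "nonneg_coeffs (f ^ n)"
proof (induction n)
  case 0
  then show ?case by (simp add: nonneg_coeffs_def lookup_one when_def)
next
  case (Suc n)
  then show ?case by (simp add: nonneg_coeffs_mult assms)
qed

definition binomial_mean :: "real \<Rightarrow> real \<Rightarrow> (nat \<Rightarrow> nat \<Rightarrow> real) \<Rightarrow> nat \<Rightarrow> real" where
  "binomial_mean p q f k = (\<Sum>m\<le>k. real (k choose m) * p ^ m * q ^ (k - m) * f m (k - m))"

text \<open>The identities \<open>(k+1) (k choose m) = (m+1) (k+1 choose m+1) = (k+1-m) (k+1 choose m)\<close> turn
  \<open>(k+1) p\<close>, resp. \<open>(k+1) q\<close>, times the \<open>k\<close>-th mean into a \<open>(k+1)\<close>-st mean with the extra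
  weight \<open>m\<close>, resp. \<open>k+1-m\<close>; these add up to \<open>k+1\<close>.\<close>
lemma binomial_mean_decay_fst:
  fixes f :: "nat \<Rightarrow> nat \<Rightarrow> real"
  assumes "\<And>m l. 0 \<le> f m l" and "0 \<le> p" "0 \<le> q" "0 \<le> a"
    and decay: "\<And>m l. (real m + 1) * f m l \<le> (real m + 1 + a) * f (Suc m) l"
  shows "(real k + 1) * p * binomial_mean p q f k
    \<le> (\<Sum>m\<le>Suc k. (real m + a) * (real (Suc k choose m) * p ^ m * q ^ (Suc k - m) * f m (Suc k - m)))"
proof -
  define w where "w m = real (Suc k choose m) * p ^ m * q ^ (Suc k - m) * f m (Suc k - m)" for m
  have summand: "(real k + 1) * p * (real (k choose m) * p ^ m * q ^ (k - m) * f m (k - m))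
      \<le> (real (Suc m) + a) * w (Suc m)" for m
  proof -
    have binom: "(real k + 1) * real (k choose m) = real (Suc k choose Suc m) * (real m + 1)"
      using Suc_times_binomial_eq[of k m] by (metis of_nat_Suc of_nat_mult add.commute)
    have "(real k + 1) * p * (real (k choose m) * p ^ m * q ^ (k - m) * f m (k - m))
        = ((real k + 1) * real (k choose m)) * (p ^ Suc m * q ^ (k - m) * f m (k - m))"
      by (simp add: mult_ac)
    also have "\<dots> = real (Suc k choose Suc m) * p ^ Suc m * q ^ (k - m) * ((real m + 1) * f m (k - m))"
      unfolding binom by (simp add: mult_ac del: binomial_Suc_Suc)
    also have "\<dots> \<le> real (Suc k choose Suc m) * p ^ Suc m * q ^ (k - m) * ((real m + 1 + a) * f (Suc m) (k - m))"
      using assms by (intro mult_left_mono decay) auto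
    also have "\<dots> = (real (Suc m) + a) * w (Suc m)"
      by (simp add: w_def algebra_simps)
    finally show ?thesis .
  qed
  have "(real k + 1) * p * binomial_mean p q f k \<le> (\<Sum>m\<le>k. (real (Suc m) + a) * w (Suc m))"
    unfolding binomial_mean_def sum_distrib_left by (rule sum_mono) (rule summand)
  also have "\<dots> \<le> (\<Sum>m\<le>Suc k. (real m + a) * w m)"
    unfolding sum.atMost_Suc_shift using assms by (simp add: w_def)
  finally show ?thesis
    unfolding w_def .
qed

lemma binomial_mean_decay_snd:
  fixes f :: "nat \<Rightarrow> nat \<Rightarrow> real"
  assumes "\<And>m l. 0 \<le> f m l" and "0 \<le> p" "0 \<le> q" "0 \<le> b"
    and decay: "\<And>m l. (real l + 1) * f m l \<le> (real l + 1 + b) * f m (Suc l)"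
  shows "(real k + 1) * q * binomial_mean p q f k
    \<le> (\<Sum>m\<le>Suc k. (real (Suc k - m) + b) * (real (Suc k choose m) * p ^ m * q ^ (Suc k - m) * f m (Suc k - m)))"
proof -
  define w where "w m = real (Suc k choose m) * p ^ m * q ^ (Suc k - m) * f m (Suc k - m)" for m
  have summand: "(real k + 1) * q * (real (k choose m) * p ^ m * q ^ (k - m) * f m (k - m))
      \<le> (real (Suc k - m) + b) * w m" if "m \<le> k" for m
  proof -
    have "(Suc k - m) * (Suc k choose m) = Suc k * (k choose m)"
      using binomial_absorb_comp[of "Suc k" m] by simp
    then have binom: "(real k + 1) * real (k choose m) = real (Suc k choose m) * (real (k - m) + 1)"
      using that by (metis Suc_diff_le of_nat_Suc of_nat_mult add.commute mult.commute)
    have "(real k + 1) * q * (real (k choose m) * p ^ m * q ^ (k - m) * f m (k - m))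
        = ((real k + 1) * real (k choose m)) * (p ^ m * q ^ (Suc k - m) * f m (k - m))"
      using that by (simp add: Suc_diff_le mult_ac)
    also have "\<dots> = real (Suc k choose m) * p ^ m * q ^ (Suc k - m) * ((real (k - m) + 1) * f m (k - m))"
      unfolding binom by (simp add: mult_ac del: binomial_Suc_Suc)
    also have "\<dots> \<le> real (Suc k choose m) * p ^ m * q ^ (Suc k - m) * ((real (k - m) + 1 + b) * f m (Suc (k - m)))"
      using assms by (intro mult_left_mono decay) auto
    also have "\<dots> = (real (Suc k - m) + b) * w m"
      using that by (simp add: w_def Suc_diff_le algebra_simps)
    finally show ?thesis .
  qed
  have "(real k + 1) * q * binomial_mean p q f k \<le> (\<Sum>m\<le>k. (real (Suc k - m) + b) * w m)"
    unfolding binomial_mean_def sum_distrib_left by (rule sum_mono) (rule summand, simp)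
  also have "\<dots> \<le> (\<Sum>m\<le>Suc k. (real (Suc k - m) + b) * w m)"
    using assms by (simp add: w_def)
  finally show ?thesis
    unfolding w_def .
qed

lemma binomial_mean_slow_decay:
  fixes f :: "nat \<Rightarrow> nat \<Rightarrow> real"
  assumes "\<And>m l. 0 \<le> f m l"
    and "0 \<le> p" "0 \<le> q" "p + q = 1" "0 \<le> a" "0 \<le> b"
    and "\<And>m l. (real m + 1) * f m l \<le> (real m + 1 + a) * f (Suc m) l"
    and "\<And>m l. (real l + 1) * f m l \<le> (real l + 1 + b) * f m (Suc l)"
  shows "(real k + 1) * binomial_mean p q f k \<le> (real k + 1 + a + b) * binomial_mean p q f (Suc k)"
proof -
  define w where "w m = real (Suc k choose m) * p ^ m * q ^ (Suc k - m) * f m (Suc k - m)" for m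
  have "(real k + 1) * binomial_mean p q f k
      = (real k + 1) * p * binomial_mean p q f k + (real k + 1) * q * binomial_mean p q f k"
    using \<open>p + q = 1\<close> by (metis distrib_left mult.assoc mult.commute mult_1)
  also have "\<dots> \<le> (\<Sum>m\<le>Suc k. (real m + a) * w m) + (\<Sum>m\<le>Suc k. (real (Suc k - m) + b) * w m)"
    unfolding w_def using assms by (intro add_mono binomial_mean_decay_fst binomial_mean_decay_snd)
  also have "\<dots> = (\<Sum>m\<le>Suc k. (real k + 1 + a + b) * w m)"
    unfolding sum.distrib[symmetric] by (intro sum.cong refl) (simp add: of_nat_diff algebra_simps)
  also have "\<dots> = (real k + 1 + a + b) * binomial_mean p q f (Suc k)"
    unfolding binomial_mean_def w_def by (rule sum_distrib_left[symmetric])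
  finally show ?thesis .
qed

text \<open>The coefficients of \<open>X\<^sup>n\<close> decay at most like \<open>n\<^sup>-\<^sup>a\<close>.\<close>
definition slow_decay :: "('g::{ab_group_add,finite} \<Rightarrow>\<^sub>0 real) \<Rightarrow> real \<Rightarrow> bool" where
  "slow_decay X a \<longleftrightarrow> nonneg_coeffs X \<and>
     (\<forall>n x. (real n + 1) * Poly_Mapping.lookup (X ^ n) x \<le> (real n + 1 + a) * Poly_Mapping.lookup (X ^ Suc n) x)"

lemma slow_decay_nonneg_coeffs: "slow_decay X a \<Longrightarrow> nonneg_coeffs X"
  by (simp add: slow_decay_def)

lemma slow_decay_mult_right:
  assumes "slow_decay X a" and "nonneg_coeffs Y"
  shows "(real n + 1) * Poly_Mapping.lookup (X ^ n * Y) x \<le> (real n + 1 + a) * Poly_Mapping.lookup (X ^ Suc n * Y) x"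
proof -
  have "(real n + 1) * (Poly_Mapping.lookup (X ^ n) y * Poly_Mapping.lookup Y (x - y))
      \<le> (real n + 1 + a) * (Poly_Mapping.lookup (X ^ Suc n) y * Poly_Mapping.lookup Y (x - y))" for y
    using assms unfolding slow_decay_def nonneg_coeffs_def
    by (metis mult.assoc mult_right_mono)
  then show ?thesis
    unfolding lookup_mult_group sum_distrib_left by (rule sum_mono)
qed

lemma lookup_power_convex_comb:
  fixes X Y :: "'g::{ab_group_add,finite} \<Rightarrow>\<^sub>0 real"
  shows "Poly_Mapping.lookup ((Poly_Mapping.single 0 p * X + Poly_Mapping.single 0 q * Y) ^ k) x
    = binomial_mean p q (\<lambda>m l. Poly_Mapping.lookup (X ^ m * Y ^ l) x) k"
proof -
  have "(Poly_Mapping.single 0 p * X + Poly_Mapping.single 0 q * Y) ^ k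
      = (\<Sum>m\<le>k. of_nat (k choose m) * (Poly_Mapping.single 0 p * X) ^ m * (Poly_Mapping.single 0 q * Y) ^ (k - m))"
    by (rule binomial_ring)
  also have "\<dots> = (\<Sum>m\<le>k. Poly_Mapping.single 0 (real (k choose m) * p ^ m * q ^ (k - m)) * (X ^ m * Y ^ (k - m)))"
  proof (rule sum.cong[OF refl])
    fix m
    have "of_nat (k choose m) = Poly_Mapping.single (0::'g) (real (k choose m))"
      by simp
    moreover have "Poly_Mapping.single 0 (real (k choose m) * p ^ m * q ^ (k - m))
        = Poly_Mapping.single (0::'g) (real (k choose m)) * Poly_Mapping.single 0 p ^ m * Poly_Mapping.single 0 q ^ (k - m)"
      by (simp add: single_0_power mult_single del: single_of_nat)
    ultimately show "of_nat (k choose m) * (Poly_Mapping.single 0 p * X) ^ m * (Poly_Mapping.single 0 q * Y) ^ (k - m)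
        = Poly_Mapping.single 0 (real (k choose m) * p ^ m * q ^ (k - m)) * (X ^ m * Y ^ (k - m))"
      by (simp add: power_mult_distrib mult_ac)
  qed
  finally show ?thesis
    by (simp add: binomial_mean_def lookup_sum)
qed

lemma slow_decay_convex_comb:
  fixes X Y :: "'g::{ab_group_add,finite} \<Rightarrow>\<^sub>0 real"
  assumes X: "slow_decay X a" and Y: "slow_decay Y b"
    and "0 \<le> p" "0 \<le> q" "p + q = 1" "0 \<le> a" "0 \<le> b"
  shows "slow_decay (Poly_Mapping.single 0 p * X + Poly_Mapping.single 0 q * Y) (a + b)"
  unfolding slow_decay_def
proof (intro conjI allI)
  have "nonneg_coeffs X" "nonneg_coeffs Y"
    using X Y by (simp_all add: slow_decay_nonneg_coeffs)
  then show "nonneg_coeffs (Poly_Mapping.single 0 p * X + Poly_Mapping.single 0 q * Y)"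
    using assms by (intro nonneg_coeffs_add nonneg_coeffs_mult nonneg_coeffs_single)
  fix n x
  define f where "f m l = Poly_Mapping.lookup (X ^ m * Y ^ l) x" for m l
  have "(real n + 1) * binomial_mean p q f n \<le> (real n + 1 + a + b) * binomial_mean p q f (Suc n)"
  proof (rule binomial_mean_slow_decay)
    show "0 \<le> f m l" for m l
      using \<open>nonneg_coeffs X\<close> \<open>nonneg_coeffs Y\<close> unfolding f_def
      by (metis nonneg_coeffs_def nonneg_coeffs_mult nonneg_coeffs_power)
    show "(real m + 1) * f m l \<le> (real m + 1 + a) * f (Suc m) l" for m l
      unfolding f_def using X \<open>nonneg_coeffs Y\<close> by (intro slow_decay_mult_right nonneg_coeffs_power)
    show "(real l + 1) * f m l \<le> (real l + 1 + b) * f m (Suc l)" for m l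
      unfolding f_def using slow_decay_mult_right[OF Y nonneg_coeffs_power[OF \<open>nonneg_coeffs X\<close>]]
      by (simp add: mult.commute)
  qed (use assms in auto)
  then show "(real n + 1) * Poly_Mapping.lookup ((Poly_Mapping.single 0 p * X + Poly_Mapping.single 0 q * Y) ^ n) x
    \<le> (real n + 1 + (a + b)) * Poly_Mapping.lookup ((Poly_Mapping.single 0 p * X + Poly_Mapping.single 0 q * Y) ^ Suc n) x"
    unfolding lookup_power_convex_comb f_def by (simp add: add.assoc)
qed

lemma binomial_central_ratio:
  assumes "i \<le> 2 * n"
  shows "4 * (real n + 1) * real (2 * n choose i) \<le> (real n + 2) * real (2 * n + 2 choose Suc i)"
proof -
  define b where "b = 2 * n + 1 choose i"
  define C where "C = 2 * n choose i"
  define C' where "C' = 2 * n + 2 choose Suc i"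
  define j where "j = 2 * n + 1 - i"
  have up: "C' * (i + 1) = (2 * n + 2) * b"
    using Suc_times_binomial_eq[of "2 * n + 1" i] unfolding b_def C'_def by simp
  have down: "j * b = (2 * n + 1) * C"
    using binomial_absorb_comp[of "2 * n + 1" i] unfolding b_def C_def j_def by simp
  have "(i + 1) * j * C' = j * (C' * (i + 1))"
    by (simp only: mult_ac)
  also have "\<dots> = (2 * n + 2) * (j * b)"
    by (simp only: up mult_ac)
  also have "\<dots> = (2 * n + 2) * ((2 * n + 1) * C)"
    by (simp only: down)
  finally have "(i + 1) * j * C' = (2 * n + 2) * ((2 * n + 1) * C)" .
  then have pascal: "(real i + 1) * real j * real C' = (2 * real n + 2) * ((2 * real n + 1) * real C)"
    by (metis (mono_tags, lifting) of_nat_1 of_nat_add of_nat_mult of_nat_numeral)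
  have am_gm: "(real i + 1) * real j \<le> (real n + 1)\<^sup>2"
  proof -
    have "(real n + 1)\<^sup>2 - (real i + 1) * real j = (real i - real n)\<^sup>2"
      using assms by (simp add: j_def of_nat_diff power2_eq_square algebra_simps)
    then show ?thesis
      using zero_le_power2[of "real i - real n"] by linarith
  qed
  have cubic: "(real n + 1)\<^sup>2 * (4 * (real n + 1)) \<le> (real n + 2) * ((2 * real n + 2) * (2 * real n + 1))"
    using mult_nonneg_nonneg[of "real n" "real n"] by (simp add: power2_eq_square algebra_simps)
  have "(real n + 1)\<^sup>2 * (4 * (real n + 1) * real C) \<le> (real n + 2) * ((2 * real n + 2) * ((2 * real n + 1) * real C))"
    using mult_right_mono[OF cubic, of "real C"] by (simp add: mult_ac)
  also have "\<dots> = (real n + 2) * ((real i + 1) * real j * real C')"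
    by (simp only: pascal)
  also have "\<dots> \<le> (real n + 2) * ((real n + 1)\<^sup>2 * real C')"
    using am_gm by (intro mult_left_mono mult_right_mono) simp_all
  finally have "(real n + 1)\<^sup>2 * (4 * (real n + 1) * real C) \<le> (real n + 1)\<^sup>2 * ((real n + 2) * real C')"
    by (simp only: mult.left_commute)
  then have "4 * (real n + 1) * real C \<le> (real n + 2) * real C'"
    by (rule mult_left_le_imp_le) simp
  then show ?thesis
    unfolding C_def C'_def .
qed

definition lazy_pair_step :: "'g::ab_group_add \<Rightarrow> 'g \<Rightarrow>\<^sub>0 real" where
  "lazy_pair_step s = Poly_Mapping.single 0 (1/2) + Poly_Mapping.single s (1/4) + Poly_Mapping.single (- s) (1/4)"

lemma lookup_lazy_pair_step:
  "Poly_Mapping.lookup (lazy_pair_step s) x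
     = (if x = 0 then 1/2 else 0) + (if x = s then 1/4 else 0) + (if x = - s then 1/4 else 0)"
  by (auto simp: lazy_pair_step_def lookup_add lookup_single when_def)

lemma lazy_pair_step_factor:
  "lazy_pair_step s = Poly_Mapping.single (- s) (1/4) * (Poly_Mapping.single s 1 + 1) ^ 2"
proof -
  let ?\<delta> = "Poly_Mapping.single s (1::real)" and ?c = "Poly_Mapping.single (- s) (1/4::real)"
  have "?c * (?\<delta> + 1) ^ 2 = ?c * ?\<delta> * ?\<delta> + (?c * ?\<delta> + ?c * ?\<delta>) + ?c"
    by (simp add: power2_eq_square algebra_simps)
  also have "\<dots> = Poly_Mapping.single s (1/4) + Poly_Mapping.single 0 (1/2) + ?c"
    by (simp add: mult_single flip: single_add)
  finally show ?thesis
    by (simp add: lazy_pair_step_def algebra_simps)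
qed

lemma lookup_lazy_pair_step_power:
  fixes s :: "'g::{ab_group_add,finite}"
  shows "Poly_Mapping.lookup (lazy_pair_step s ^ n) x = (1/4) ^ n *
    (\<Sum>i\<le>2 * n. real (2 * n choose i) * Poly_Mapping.lookup (Poly_Mapping.single (- s) 1 ^ n * Poly_Mapping.single s 1 ^ i) x)"
proof -
  have "(Poly_Mapping.single s 1 + 1) ^ (2 * n)
      = (\<Sum>i\<le>2 * n. Poly_Mapping.single 0 (real (2 * n choose i)) * Poly_Mapping.single s (1::real) ^ i)"
    by (simp add: binomial_ring)
  moreover have "Poly_Mapping.single (- s) (1/4) = Poly_Mapping.single 0 (1/4) * Poly_Mapping.single (- s) (1::real)"
    by (simp add: mult_single)
  ultimately have "lazy_pair_step s ^ n = (\<Sum>i\<le>2 * n. Poly_Mapping.single 0 ((1/4) ^ n)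
      * (Poly_Mapping.single 0 (real (2 * n choose i)) * (Poly_Mapping.single (- s) 1 ^ n * Poly_Mapping.single s 1 ^ i)))"
    by (simp add: lazy_pair_step_factor power_mult_distrib power_mult[symmetric] sum_distrib_left
        single_0_power mult_ac del: single_of_nat)
  then show ?thesis
    by (simp only: lookup_sum lookup_single_0_mult sum_distrib_left)
qed

lemma single_uminus_power_mult_Suc_Suc:
  "Poly_Mapping.single (- s) 1 ^ Suc m * Poly_Mapping.single s 1 ^ Suc i
    = Poly_Mapping.single (- s) 1 ^ m * Poly_Mapping.single (s::'g::ab_group_add) (1::'b::comm_semiring_1) ^ i"
proof -
  have "Poly_Mapping.single (- s) 1 ^ Suc m * Poly_Mapping.single s 1 ^ Suc i
      = Poly_Mapping.single (- s) 1 ^ m * Poly_Mapping.single s (1::'b) ^ i * (Poly_Mapping.single (- s) 1 * Poly_Mapping.single s 1)"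
    by (simp add: mult_ac)
  then show ?thesis
    by (simp add: mult_single)
qed

text \<open>\<open>lazy_pair_step s ^ n\<close> puts mass \<open>4\<^sup>-\<^sup>n (2n choose i)\<close> on \<open>(i - n) s\<close>; the boundary terms
  \<open>i = 0\<close> and \<open>i = 2n + 2\<close> of the next power are simply dropped.\<close>
lemma slow_decay_lazy_pair_step:
  fixes s :: "'g::{ab_group_add,finite}"
  shows "slow_decay (lazy_pair_step s) 1"
  unfolding slow_decay_def
proof (intro conjI allI)
  show "nonneg_coeffs (lazy_pair_step s)"
    by (simp add: nonneg_coeffs_def lookup_lazy_pair_step)
  fix n x
  define E where "E m i = Poly_Mapping.lookup (Poly_Mapping.single (- s) 1 ^ m * Poly_Mapping.single s (1::real) ^ i) x" for m i
  have E_nonneg: "0 \<le> E m i" for m i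
    unfolding E_def by (metis nonneg_coeffs_def nonneg_coeffs_mult nonneg_coeffs_power nonneg_coeffs_single zero_le_one)
  have E_Suc_Suc: "E (Suc m) (Suc i) = E m i" for m i
    unfolding E_def single_uminus_power_mult_Suc_Suc ..
  define F where "F i = real (2 * n + 2 choose i) * E (Suc n) i" for i
  have F_nonneg: "0 \<le> F i" for i
    by (simp add: F_def E_nonneg)
  have "(real n + 1) * Poly_Mapping.lookup (lazy_pair_step s ^ n) x
      = (\<Sum>i\<le>2 * n. (1/4) ^ Suc n * (4 * (real n + 1) * real (2 * n choose i)) * E n i)"
    unfolding lookup_lazy_pair_step_power E_def sum_distrib_left
    by (intro sum.cong refl) (simp add: field_simps)
  also have "\<dots> \<le> (\<Sum>i\<le>2 * n. (1/4) ^ Suc n * (real n + 2) * F (Suc i))"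
  proof (rule sum_mono)
    fix i
    assume "i \<in> {..2 * n}"
    then have "4 * (real n + 1) * real (2 * n choose i) \<le> (real n + 2) * real (2 * n + 2 choose Suc i)"
      by (intro binomial_central_ratio) simp
    then have "(1/4) ^ Suc n * (4 * (real n + 1) * real (2 * n choose i)) * E n i
        \<le> (1/4) ^ Suc n * ((real n + 2) * real (2 * n + 2 choose Suc i)) * E n i"
      by (intro mult_right_mono mult_left_mono E_nonneg) (simp_all del: power_Suc)
    then show "(1/4) ^ Suc n * (4 * (real n + 1) * real (2 * n choose i)) * E n i \<le> (1/4) ^ Suc n * (real n + 2) * F (Suc i)"
      by (simp only: F_def E_Suc_Suc mult.assoc)
  qed
  also have "\<dots> \<le> (1/4) ^ Suc n * (real n + 2) * (\<Sum>i\<le>2 * Suc n. F i)"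
  proof -
    have "(\<Sum>i\<le>2 * n. F (Suc i)) \<le> F 0 + (\<Sum>i\<le>Suc (2 * n). F (Suc i))"
      using F_nonneg by simp
    also have "\<dots> = (\<Sum>i\<le>2 * Suc n. F i)"
      unfolding mult_Suc_right add_2_eq_Suc by (rule sum.atMost_Suc_shift[symmetric])
    finally show ?thesis
      unfolding sum_distrib_left[symmetric] by (rule mult_left_mono) simp
  qed
  also have "\<dots> = (real n + 1 + 1) * Poly_Mapping.lookup (lazy_pair_step s ^ Suc n) x"
  proof -
    have "2 * Suc n = 2 * n + 2" "real n + 1 + 1 = real n + 2"
      by simp_all
    then show ?thesis
      by (simp only: lookup_lazy_pair_step_power F_def E_def sum_distrib_left mult_ac)
  qed
  finally show "(real n + 1) * Poly_Mapping.lookup (lazy_pair_step s ^ n) x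
    \<le> (real n + 1 + 1) * Poly_Mapping.lookup (lazy_pair_step s ^ Suc n) x" .
qed

text \<open>The lazy walk step of \<open>Cay(\<Gamma>, S \<union># -S)\<close>; for symmetric \<open>S\<close> it is the lazy walk of \<open>Cay(\<Gamma>, S)\<close>.
  For \<open>S = {#}\<close> it is \<open>0\<close>, which is why the lemmas below assume \<open>S \<noteq> {#}\<close>.\<close>
definition lazy_step :: "'g::ab_group_add multiset \<Rightarrow> 'g \<Rightarrow>\<^sub>0 real" where
  "lazy_step S = Poly_Mapping.single 0 (1 / real (size S)) * (\<Sum>s\<in>#S. lazy_pair_step s)"

lemma lookup_sum_lazy_pair_steps:
  "Poly_Mapping.lookup (\<Sum>s\<in>#S. lazy_pair_step s) x
     = real (size S) / 2 * (if x = 0 then 1 else 0) + (real (count S x) + real (count S (- x))) / 4"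
proof (induction S)
  case empty
  then show ?case by simp
next
  case (add s S)
  have "x = - s \<longleftrightarrow> s = - x"
    by auto
  with add show ?case
    by (auto simp: lookup_add lookup_lazy_pair_step field_simps)
qed

lemma lookup_lazy_step:
  fixes S :: "'g::{ab_group_add,finite} multiset"
  assumes "S \<noteq> {#}"
  shows "Poly_Mapping.lookup (lazy_step S) x
    = (if x = 0 then 1/2 else 0) + (real (count S x) + real (count S (- x))) / (4 * real (size S))"
  unfolding lazy_step_def lookup_single_0_mult lookup_sum_lazy_pair_steps
  using assms by (simp add: field_simps)

lemma lazy_step_add_mset:
  fixes M :: "'g::{ab_group_add,finite} multiset"
  assumes "M \<noteq> {#}"
  shows "lazy_step (add_mset s M) = Poly_Mapping.single 0 (1 / (real (size M) + 1)) * lazy_pair_step s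
    + Poly_Mapping.single 0 (real (size M) / (real (size M) + 1)) * lazy_step M"
proof -
  define m where "m = real (size M)"
  have "m > 0"
    using assms by (simp add: m_def nonempty_has_size)
  then have sum_M: "(\<Sum>s\<in>#M. lazy_pair_step s) = Poly_Mapping.single 0 m * lazy_step M"
    by (simp add: lazy_step_def m_def mult.assoc[symmetric] mult_single del: single_of_nat)
  have "lazy_step (add_mset s M)
      = Poly_Mapping.single 0 (1 / (m + 1)) * (lazy_pair_step s + (\<Sum>s\<in>#M. lazy_pair_step s))"
    by (simp add: lazy_step_def m_def add.commute)
  also have "\<dots> = Poly_Mapping.single 0 (1 / (m + 1)) * lazy_pair_step s
      + (Poly_Mapping.single 0 (1 / (m + 1)) * Poly_Mapping.single 0 m) * lazy_step M"
    by (simp only: sum_M distrib_left mult.assoc)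
  also have "\<dots> = Poly_Mapping.single 0 (1 / (m + 1)) * lazy_pair_step s
      + Poly_Mapping.single 0 (m / (m + 1)) * lazy_step M"
    by (simp add: mult_single del: single_of_nat)
  finally show ?thesis
    unfolding m_def .
qed

lemma slow_decay_lazy_step:
  fixes S :: "'g::{ab_group_add,finite} multiset"
  assumes "S \<noteq> {#}"
  shows "slow_decay (lazy_step S) (real (size S))"
  using assms
proof (induction S)
  case empty
  then show ?case by simp
next
  case (add s M)
  show ?case
  proof (cases "M = {#}")
    case True
    then show ?thesis
      by (simp add: lazy_step_def slow_decay_lazy_pair_step)
  next
    case False
    have "slow_decay (lazy_step (add_mset s M)) (1 + real (size M))"
      unfolding lazy_step_add_mset[OF False]
      by (rule slow_decay_convex_comb[OF slow_decay_lazy_pair_step add.IH[OF False]]) (auto simp: field_simps)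
    then show ?thesis
      by (simp add: add.commute)
  qed
qed

lemma matpow_mult_commute: "matpow M k ** M = M ** matpow M k"
proof (induction k)
  case 0
  then show ?case by (simp add: matrix_mul_lid matrix_mul_rid)
next
  case (Suc k)
  then show ?case by (metis matpow.simps(2) matrix_mul_assoc)
qed

lemma matpow_convolution_axis:
  fixes Z :: "'g::{ab_group_add,finite} \<Rightarrow>\<^sub>0 real"
  assumes M: "\<And>u v. M $ u $ v = Poly_Mapping.lookup Z (v - u)"
  shows "(matpow M k *v axis 0 1) $ u = Poly_Mapping.lookup (Z ^ k) (- u)"
proof (induction k arbitrary: u)
  case 0
  then show ?case by (simp add: matrix_vector_mul_lid axis_def lookup_one when_def)
next
  case (Suc k)
  have component: "(M *v y) $ u = (\<Sum>v\<in>UNIV. M $ u $ v * y $ v)" for y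
    by (simp add: matrix_vector_mult_def)
  have "(matpow M (Suc k) *v axis 0 1) $ u = (M *v (matpow M k *v axis 0 1)) $ u"
    by (simp add: matpow_mult_commute matrix_vector_mul_assoc)
  also have "\<dots> = (\<Sum>v\<in>UNIV. Poly_Mapping.lookup Z (v - u) * Poly_Mapping.lookup (Z ^ k) (- v))"
    unfolding component M Suc.IH ..
  also have "\<dots> = (\<Sum>y\<in>UNIV. Poly_Mapping.lookup Z y * Poly_Mapping.lookup (Z ^ k) (- u - y))"
    by (rule sum.reindex_bij_witness[of _ "\<lambda>y. u + y" "\<lambda>v. v - u"]) (auto simp: algebra_simps)
  also have "\<dots> = Poly_Mapping.lookup (Z ^ Suc k) (- u)"
    by (simp add: lookup_mult_group)
  finally show ?case .
qed

lemma lazy_walk_eq_lookup_lazy_step: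
  fixes S :: "'g::{ab_group_add,finite} multiset"
  assumes "symmetric_mset S" and "S \<noteq> {#}"
  shows "lazy_walk S $ u $ v = Poly_Mapping.lookup (lazy_step S) (v - u)"
proof -
  have "count S (u - v) = count S (v - u)"
    using assms(1) unfolding symmetric_mset_def by (metis minus_diff_eq)
  then show ?thesis
    using assms(2) by (simp add: lazy_walk_def cay_norm_adj_def cay_adj_def mat_def lookup_lazy_step field_simps)
qed

lemma CP_eq_lookup_lazy_step:
  fixes S :: "'g::{ab_group_add,finite} multiset"
  assumes "symmetric_mset S" and "S \<noteq> {#}"
  shows "CP S t = Poly_Mapping.lookup (lazy_step S ^ (2 * t)) 0"
proof -
  let ?Z = "lazy_step S"
  have Z_sym: "Poly_Mapping.lookup ?Z (- x) = Poly_Mapping.lookup ?Z x" for x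
    using assms unfolding symmetric_mset_def by (simp add: lookup_lazy_step)
  have "CP S t = (\<Sum>u\<in>UNIV. ((matpow (lazy_walk S) t *v axis 0 1) $ u)\<^sup>2)"
    unfolding CP_def norm_vec_def L2_set_def by (simp add: sum_nonneg)
  also have "\<dots> = (\<Sum>u\<in>UNIV. Poly_Mapping.lookup (?Z ^ t) u * Poly_Mapping.lookup (?Z ^ t) (0 - u))"
    using matpow_convolution_axis[OF lazy_walk_eq_lookup_lazy_step[OF assms]]
    by (simp add: lookup_power_uminus[OF Z_sym] power2_eq_square)
  also have "\<dots> = Poly_Mapping.lookup (?Z ^ (2 * t)) 0"
    by (simp add: lookup_mult_group mult_2 power_add)
  finally show ?thesis .
qed

lemma pochhammer_weighted_incseq:
  fixes c :: "nat \<Rightarrow> real"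
  assumes step: "\<And>k. (real k + 1) * c k \<le> (real k + 1 + real d) * c (Suc k)"
  shows "incseq (\<lambda>k. pochhammer (real k + 1) d * c k)"
proof (rule incseq_SucI)
  fix k
  have rec: "(real k + 1 + real d) * pochhammer (real k + 1) d = (real k + 1) * pochhammer (real k + 2) d"
    using pochhammer_rec[of "real k + 1" d] pochhammer_rec'[of "real k + 1" d]
    by (simp add: add.assoc algebra_simps)
  have "(real k + 1) * (pochhammer (real k + 1) d * c k) = pochhammer (real k + 1) d * ((real k + 1) * c k)"
    by (simp only: mult_ac)
  also have "\<dots> \<le> pochhammer (real k + 1) d * ((real k + 1 + real d) * c (Suc k))"
    by (intro mult_left_mono step) (simp add: pochhammer_nonneg)
  also have "\<dots> = ((real k + 1 + real d) * pochhammer (real k + 1) d) * c (Suc k)"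
    by (simp only: mult_ac)
  also have "\<dots> = (real k + 1) * (pochhammer (real k + 2) d * c (Suc k))"
    by (simp only: rec mult.assoc)
  finally have "pochhammer (real k + 1) d * c k \<le> pochhammer (real k + 2) d * c (Suc k)"
    by (rule mult_left_le_imp_le) simp
  then show "pochhammer (real k + 1) d * c k \<le> pochhammer (real (Suc k) + 1) d * c (Suc k)"
    by (simp add: add.commute)
qed

lemma pochhammer_double_le:
  fixes x :: real
  assumes "0 \<le> x"
  shows "pochhammer (2 * x + 1) d \<le> 2 ^ d * pochhammer (x + 1) d"
proof -
  have "pochhammer (2 * x + 1) d = (\<Prod>i = 0..<d. 2 * x + 1 + real i)"
    by (simp add: pochhammer_prod)
  also have "\<dots> \<le> (\<Prod>i = 0..<d. 2 * (x + 1 + real i))"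
    using assms by (intro prod_mono) auto
  also have "\<dots> = 2 ^ d * pochhammer (x + 1) d"
    unfolding prod.distrib pochhammer_prod by simp
  finally show ?thesis .
qed

lemma doubling_le_of_slow_decay:
  fixes c :: "nat \<Rightarrow> real"
  assumes step: "\<And>k. (real k + 1) * c k \<le> (real k + 1 + real d) * c (Suc k)"
    and nonneg: "\<And>k. 0 \<le> c k"
  shows "c n \<le> 2 ^ d * c (2 * n)"
proof -
  have pos: "0 < pochhammer (real n + 1) d"
    by (rule pochhammer_pos) simp
  have "pochhammer (real n + 1) d * c n \<le> pochhammer (real (2 * n) + 1) d * c (2 * n)"
    using incseqD[OF pochhammer_weighted_incseq[OF step], of n "2 * n"] by simp
  also have "\<dots> \<le> (2 ^ d * pochhammer (real n + 1) d) * c (2 * n)"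
    using pochhammer_double_le[of "real n" d] nonneg by (intro mult_right_mono) simp_all
  finally show ?thesis
    using pos by (simp add: mult_ac mult_le_cancel_left_pos)
qed

theorem lemma4p4:
  fixes S :: "('a::{ab_group_add,finite}) multiset" and d t :: nat
  assumes "symmetric_mset S"
    and "size S = d"
    and "d \<ge> 1"
  shows "CP S t / CP S (2 * t) \<le> (2 * exp 1) ^ (4 * d)"
proof -
  have "S \<noteq> {#}"
    using assms(2,3) by auto
  define c where "c k = Poly_Mapping.lookup (lazy_step S ^ k) 0" for k
  have decay: "slow_decay (lazy_step S) (real d)"
    using slow_decay_lazy_step[OF \<open>S \<noteq> {#}\<close>] assms(2) by simp
  have c_nonneg: "0 \<le> c k" for k
    using nonneg_coeffs_power[OF slow_decay_nonneg_coeffs[OF decay]] by (simp add: c_def nonneg_coeffs_def)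
  have "c (2 * t) \<le> 2 ^ d * c (2 * (2 * t))"
    using decay c_nonneg unfolding slow_decay_def c_def by (intro doubling_le_of_slow_decay) auto
  then have "CP S t / CP S (2 * t) \<le> 2 ^ d"
    using c_nonneg[of "2 * (2 * t)"]
    by (simp add: CP_eq_lookup_lazy_step[OF assms(1) \<open>S \<noteq> {#}\<close>] c_def[symmetric] divide_le_eq)
  also have "(2::real) ^ d \<le> ((2 * exp 1) ^ 4) ^ d"
  proof (rule power_mono)
    have "1 \<le> 2 * exp (1::real)"
      using one_le_exp_iff[of 1] by linarith
    then have "2 * exp 1 \<le> (2 * exp (1::real)) ^ 4"
      using power_increasing[of 1 4 "2 * exp 1 :: real"] by simp
    then show "2 \<le> (2 * exp (1::real)) ^ 4"
      using one_le_exp_iff[of 1] by linarith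
  qed simp
  finally show ?thesis
    by (simp add: power_mult)
qed

end
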